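(* Let $n,d\in\mathbb N$ with $d<n$. For every continuous function $F:\mathscr C_d^n\to\mathbb R^d$ there exists $z\in\mathscr C_d^n$ with $F(z)=F(-z)$.
   Context: $\mathscr C_d^n=\{x\in[-1,1]^n:\ \text{there is }\sigma\subseteq\{1,\dots,n\}\text{ with }|\sigma|\ge n-d\text{ and }|x(i)|=1\ \forall i\in\sigma\}$, the union of all faces of the cube $[-1,1]^n$ of dimension at most $d$ (with the subspace topology). *)

theory Defs
  imports "HOL-Analysis.Analysis"
begin

text \<open>The union of all faces of dimension at most d of the cube [-1,1]^n,
  where n = CARD('n) is the dimension of the ambient space real^'n.\<close>
definition cube_skeleton :: "nat \<Rightarrow> (real^'n) set" where
  "cube_skeleton d = {x. (\<forall>i. \<bar>x $ i\<bar> \<le> 1) \<and>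
      (\<exists>\<sigma>::'n set. card \<sigma> \<ge> CARD('n) - d \<and> (\<forall>i\<in>\<sigma>. \<bar>x $ i\<bar> = 1))}"

text \<open>R^d, realised inside the product space nat => real as the vectors
  vanishing from coordinate d on.\<close>
definition Rd :: "nat \<Rightarrow> (nat \<Rightarrow> real) set" where
  "Rd d = {y. \<forall>j\<ge>d. y j = 0}"

end

theory Submission
  imports Defs "HOL-Homology.Homology" "HOL-Computational_Algebra.Polynomial"
begin

text \<open>
  Fix distinct nodes \<open>t\<^sub>j\<close> indexed by the coordinates of \<open>real^'n\<close>. A point \<open>y\<close> of the
  \<open>d\<close>-sphere is the coefficient vector of a nonzero polynomial \<open>p\<^sub>y\<close> of degree at most \<open>d\<close>,
  which vanishes at no more than \<open>d\<close> nodes. By compactness there is an \<open>\<epsilon> > 0\<close> such that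
  for every \<open>y\<close> at most \<open>d\<close> of the values \<open>p\<^sub>y(t\<^sub>j)\<close> are smaller than \<open>\<epsilon>\<close> in absolute
  value, so clamping \<open>p\<^sub>y(t\<^sub>j)/\<epsilon>\<close> to \<open>[-1,1]\<close> gives a continuous odd map \<open>E\<close> from the
  \<open>d\<close>-sphere to the \<open>d\<close>-skeleton of the cube. Borsuk--Ulam applied to
  \<open>y \<mapsto> F(E y) - F(E(-y))\<close> yields the antipodal pair.

  Borsuk--Ulam is derived from the fact that odd self-maps of spheres have odd degree mod 2.
  This is proved by induction on the dimension: an odd map is first homotoped (via polynomial
  approximation and Sard's lemma in a Euclidean model) to one missing a point on the equator,
  then rotated so that it misses the north pole there, and finally deformed so that it maps
  the equator to itself; for such maps Borsuk's step lemma says that the degrees on the sphere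
  and on the equator agree mod 2.
\<close>

section \<open>Spheres in \<open>nat \<Rightarrow> real\<close>\<close>

abbreviation nsphere_points :: "nat \<Rightarrow> (nat \<Rightarrow> real) set" where
  "nsphere_points m \<equiv> topspace (nsphere m)"

abbreviation antipode :: "(nat \<Rightarrow> real) \<Rightarrow> nat \<Rightarrow> real" where
  "antipode x \<equiv> \<lambda>i. - x i"

lemma mem_nsphere_iff:
  "x \<in> nsphere_points m \<longleftrightarrow> (\<Sum>i\<le>m. (x i)\<^sup>2) = 1 \<and> (\<forall>i>m. x i = 0)"
  by (simp add: nsphere)

lemma antipode_mem_nsphere: "x \<in> nsphere_points m \<Longrightarrow> antipode x \<in> nsphere_points m"
  by (simp add: mem_nsphere_iff)

lemma nsphere_eq_top_of_set: "nsphere m = top_of_set (nsphere_points m)"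
  by (simp add: nsphere euclidean_product_topology)

lemma continuous_map_nsphere_iff:
  "continuous_map (nsphere m) (nsphere k) f \<longleftrightarrow>
     continuous_on (nsphere_points m) f \<and> f ` nsphere_points m \<subseteq> nsphere_points k"
  by (metis continuous_map_subtopology_eu image_subset_iff_funcset nsphere_eq_top_of_set)

lemma nsphere_equator_points:
  assumes "m \<noteq> 0" "x \<in> nsphere_points (m - 1)"
  shows "x \<in> nsphere_points m" "x m = 0"
proof -
  have "nsphere (m - 1) = subtopology (nsphere m) {x. x m = 0}"
    using assms subtopology_nsphere_equator[of "m - 1"] by simp
  then have "nsphere_points (m - 1) = nsphere_points m \<inter> {x. x m = 0}"
    by simp
  then show "x \<in> nsphere_points m" "x m = 0"
    using assms by auto
qed

lemma nsphere_points_mono_pred: "m \<noteq> 0 \<Longrightarrow> nsphere_points (m - 1) \<subseteq> nsphere_points m"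
  using nsphere_equator_points by blast

lemma continuous_on_coordinate [continuous_intros]:
  "continuous_on S (\<lambda>x::nat \<Rightarrow> real. x i)"
  by (rule continuous_on_subset[OF continuous_on_product_coordinates]) simp

section \<open>Coordinates of \<open>real^'n\<close> as an initial segment of \<open>nat\<close>\<close>

text \<open>The spheres \<open>nsphere m\<close> live in \<open>nat \<Rightarrow> real\<close>, which is not a Euclidean space.
  Identifying \<open>real^'n\<close> with the first \<open>CARD('n)\<close> coordinates gives a Euclidean model of
  \<open>nsphere m\<close> for \<open>m < CARD('n)\<close>, in which polynomial approximation and Sard's lemma are
  available.\<close>

definition coord_index :: "'n::finite \<Rightarrow> nat" where
  "coord_index \<equiv> SOME f. bij_betw f (UNIV::'n set) {..<CARD('n)}"

lemma bij_coord_index: "bij_betw (coord_index::'n::finite \<Rightarrow> nat) UNIV {..<CARD('n)}"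
proof -
  have "\<exists>f. bij_betw f (UNIV::'n set) {..<CARD('n)}"
    by (rule finite_same_card_bij) auto
  then show ?thesis unfolding coord_index_def by (rule someI_ex)
qed

lemma coord_index_less: "coord_index (j::'n::finite) < CARD('n)"
  using bij_coord_index bij_betwE by blast

lemma inj_coord_index: "inj (coord_index :: 'n::finite \<Rightarrow> nat)"
  using bij_coord_index bij_betw_imp_inj_on by blast

definition index_coord :: "nat \<Rightarrow> 'n::finite" where
  "index_coord = inv_into UNIV coord_index"

lemma coord_index_index_coord:
  "i < CARD('n::finite) \<Longrightarrow> coord_index (index_coord i :: 'n) = i"
  unfolding index_coord_def
  using bij_coord_index by (metis bij_betw_imp_surj_on f_inv_into_f lessThan_iff)

lemma index_coord_coord_index: "index_coord (coord_index (j::'n::finite)) = j"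
  by (simp add: index_coord_def inj_coord_index)

definition vec_of_seq :: "(nat \<Rightarrow> real) \<Rightarrow> real^'n::finite" where
  "vec_of_seq y = (\<chi> j. y (coord_index j))"

definition seq_of_vec :: "real^'n::finite \<Rightarrow> nat \<Rightarrow> real" where
  "seq_of_vec x = (\<lambda>i. if i < CARD('n) then x $ index_coord i else 0)"

definition coord_subspace :: "nat \<Rightarrow> (real^'n::finite) set" where
  "coord_subspace m = {x. \<forall>j. m < coord_index j \<longrightarrow> x $ j = 0}"

lemma vec_of_seq_of_vec [simp]: "vec_of_seq (seq_of_vec x) = x"
  by (simp add: vec_of_seq_def seq_of_vec_def coord_index_less index_coord_coord_index vec_eq_iff)

lemma seq_of_vec_of_seq:
  "(\<And>i. CARD('n::finite) \<le> i \<Longrightarrow> y i = 0) \<Longrightarrow> seq_of_vec (vec_of_seq y :: real^'n) = y"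
  by (auto simp: vec_of_seq_def seq_of_vec_def coord_index_index_coord fun_eq_iff not_less)

lemma seq_of_vec_minus: "seq_of_vec (- x) = antipode (seq_of_vec x)"
  by (auto simp: seq_of_vec_def fun_eq_iff)

lemma vec_of_seq_antipode: "vec_of_seq (antipode y) = - vec_of_seq y"
  by (auto simp: vec_of_seq_def vec_eq_iff)

lemma subspace_coord_subspace: "subspace (coord_subspace m)"
  by (auto simp: subspace_def coord_subspace_def)

lemma norm_vec_of_seq_sq:
  assumes "\<And>i. CARD('n::finite) \<le> i \<Longrightarrow> y i = 0"
  shows "(norm (vec_of_seq y :: real^'n))\<^sup>2 = (\<Sum>i<CARD('n). (y i)\<^sup>2)"
proof -
  have "(norm (vec_of_seq y :: real^'n))\<^sup>2 = (\<Sum>j\<in>UNIV. (y (coord_index (j::'n)))\<^sup>2)"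
    unfolding power2_norm_eq_inner by (simp add: inner_vec_def vec_of_seq_def power2_eq_square)
  also have "\<dots> = (\<Sum>i<CARD('n). (y i)\<^sup>2)"
    by (rule sum.reindex_bij_betw[OF bij_coord_index])
  finally show ?thesis .
qed

lemma nsphere_sum_sq_extend:
  assumes "m < N" "y \<in> nsphere_points m"
  shows "(\<Sum>i<N. (y i)\<^sup>2) = 1"
proof -
  have "(\<Sum>i<N. (y i)\<^sup>2) = (\<Sum>i\<le>m. (y i)\<^sup>2)"
    by (rule sum.mono_neutral_right) (use assms in \<open>auto simp: mem_nsphere_iff\<close>)
  then show ?thesis using assms(2) by (simp add: mem_nsphere_iff)
qed

lemma vec_of_seq_in_sphere:
  assumes "m < CARD('n::finite)" "y \<in> nsphere_points m"
  shows "(vec_of_seq y :: real^'n) \<in> sphere 0 1 \<inter> coord_subspace m"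
proof -
  have "(norm (vec_of_seq y :: real^'n))\<^sup>2 = 1"
    using assms by (subst norm_vec_of_seq_sq) (auto simp: mem_nsphere_iff nsphere_sum_sq_extend)
  then have "norm (vec_of_seq y :: real^'n) = 1"
    using norm_ge_zero[of "vec_of_seq y :: real^'n"] by (auto simp: power2_eq_1_iff)
  then show ?thesis
    using assms(2) by (auto simp: coord_subspace_def vec_of_seq_def mem_nsphere_iff)
qed

lemma seq_of_vec_in_nsphere:
  assumes "m < CARD('n::finite)" "(x::real^'n) \<in> sphere 0 1 \<inter> coord_subspace m"
  shows "seq_of_vec x \<in> nsphere_points m"
proof -
  have vanish: "\<And>i. m < i \<Longrightarrow> seq_of_vec x i = 0"
    using assms by (auto simp: seq_of_vec_def coord_subspace_def coord_index_index_coord)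
  have "(norm (vec_of_seq (seq_of_vec x) :: real^'n))\<^sup>2 = (\<Sum>i<CARD('n). (seq_of_vec x i)\<^sup>2)"
    by (rule norm_vec_of_seq_sq) (simp add: seq_of_vec_def)
  then have "(\<Sum>i<CARD('n). (seq_of_vec x i)\<^sup>2) = 1"
    using assms by simp
  moreover have "(\<Sum>i<CARD('n). (seq_of_vec x i)\<^sup>2) = (\<Sum>i\<le>m. (seq_of_vec x i)\<^sup>2)"
    by (rule sum.mono_neutral_right) (use assms(1) vanish in auto)
  ultimately show ?thesis
    using vanish by (simp add: mem_nsphere_iff)
qed

lemma continuous_on_seq_of_vec: "continuous_on S (seq_of_vec :: real^'n::finite \<Rightarrow> _)"
proof (rule continuous_on_subset)
  show "continuous_on UNIV (seq_of_vec :: real^'n \<Rightarrow> _)"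
    unfolding seq_of_vec_def
    apply (rule continuous_on_coordinatewise_then_product)
    subgoal for i by (cases "i < CARD('n)") (auto intro!: continuous_intros)
    done
qed simp

lemma continuous_map_vec_of_seq:
  assumes "m < CARD('n::finite)"
  shows "continuous_map (nsphere m) (top_of_set (sphere 0 1 \<inter> coord_subspace m))
           (vec_of_seq :: _ \<Rightarrow> real^'n)"
proof -
  have "continuous_on (nsphere_points m) (vec_of_seq :: _ \<Rightarrow> real^'n)"
    unfolding vec_of_seq_def by (intro continuous_on_vec_lambda continuous_intros)
  then show ?thesis
    using vec_of_seq_in_sphere[OF assms]
    by (subst nsphere_eq_top_of_set) (auto simp: continuous_map_subtopology_eu)
qed

lemma continuous_map_seq_of_vec:
  assumes "m < CARD('n::finite)"
  shows "continuous_map (top_of_set (sphere 0 1 \<inter> coord_subspace m)) (nsphere m)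
           (seq_of_vec :: real^'n \<Rightarrow> _)"
  using seq_of_vec_in_nsphere[OF assms] continuous_on_seq_of_vec
  by (subst nsphere_eq_top_of_set) (auto simp: continuous_map_subtopology_eu)

lemma compact_nsphere_points:
  assumes "m < CARD('n::finite)"
  shows "compact (nsphere_points m)"
proof -
  have "nsphere_points m = (seq_of_vec :: real^'n \<Rightarrow> _) ` (sphere 0 1 \<inter> coord_subspace m)"
  proof
    show "nsphere_points m \<subseteq> (seq_of_vec :: real^'n \<Rightarrow> _) ` (sphere 0 1 \<inter> coord_subspace m)"
    proof
      fix y assume y: "y \<in> nsphere_points m"
      then have "y = seq_of_vec (vec_of_seq y :: real^'n)"
        using assms by (simp add: seq_of_vec_of_seq mem_nsphere_iff)
      then show "y \<in> (seq_of_vec :: real^'n \<Rightarrow> _) ` (sphere 0 1 \<inter> coord_subspace m)"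
        using vec_of_seq_in_sphere[OF assms y] by blast
    qed
  qed (use seq_of_vec_in_nsphere[OF assms] in blast)
  moreover have "compact (sphere 0 1 \<inter> (coord_subspace m :: (real^'n) set))"
    by (simp add: closed_subspace compact_Int_closed subspace_coord_subspace)
  ultimately show ?thesis
    by (metis compact_continuous_image continuous_on_seq_of_vec)
qed


section \<open>Odd maps of Euclidean spheres\<close>

lemma odd_polynomial_function_approximation:
  fixes f :: "'a::euclidean_space \<Rightarrow> 'b::euclidean_space"
  assumes "compact S" and symS: "\<And>x. x \<in> S \<Longrightarrow> -x \<in> S" and "continuous_on S f" "0 < e"
    and "subspace T" "f ` S \<subseteq> T" and odd: "\<And>x. x \<in> S \<Longrightarrow> f (-x) = - f x"
  obtains g where "polynomial_function g" "\<And>x. g (-x) = - g x" "g ` S \<subseteq> T"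
    "\<And>x. x \<in> S \<Longrightarrow> norm (f x - g x) < e"
proof -
  obtain g0 where pg0: "polynomial_function g0" and g0T: "g0 ` S \<subseteq> T"
    and approx: "\<And>x. x \<in> S \<Longrightarrow> norm (f x - g0 x) < e"
    using Stone_Weierstrass_polynomial_function_subspace[OF assms(1,3,4,5,6)] by blast
  define g where "g x = (1/2) *\<^sub>R (g0 x - g0 (-x))" for x
  show thesis
  proof
    have "polynomial_function (\<lambda>x. g0 (-x))"
      using polynomial_function_compose[OF polynomial_function_minus[OF polynomial_function_id] pg0]
      by (simp add: o_def)
    then show "polynomial_function g"
      unfolding g_def using pg0 by (intro polynomial_function_cmul polynomial_function_diff)
    show "g (-x) = - g x" for x
      by (simp add: g_def algebra_simps)
    show "g ` S \<subseteq> T"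
      using g0T symS \<open>subspace T\<close> by (auto simp: g_def intro!: subspace_scale subspace_diff)
    show "norm (f x - g x) < e" if "x \<in> S" for x
    proof -
      have "f x - g x = (1/2) *\<^sub>R ((f x - g0 x) - (f (-x) - g0 (-x)))"
        using odd[OF that] by (simp add: g_def algebra_simps flip: scaleR_add_left)
      also have "norm \<dots> \<le> (1/2) * (norm (f x - g0 x) + norm (f (-x) - g0 (-x)))"
        by (simp add: norm_triangle_ineq4)
      also have "\<dots> < (1/2) * (e + e)"
        using approx[OF that] approx[OF symS[OF that]] by simp
      finally show ?thesis by simp
    qed
  qed
qed

lemma homotopic_with_normalized_approximation:
  fixes f g :: "'a::topological_space \<Rightarrow> 'b::real_normed_vector"
  assumes "subspace T" "continuous_on S f" "f \<in> S \<rightarrow> sphere 0 1 \<inter> T"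
    and "continuous_on S g" "g \<in> S \<rightarrow> T" "\<And>x. x \<in> S \<Longrightarrow> norm (f x - g x) < 1"
  shows "homotopic_with_canon (\<lambda>x. True) S (sphere 0 1 \<inter> T) f (\<lambda>x. g x /\<^sub>R norm (g x))"
proof -
  have "homotopic_with_canon (\<lambda>x. True) S (T - {0}) f g"
  proof (rule homotopic_with_linear[OF assms(2,4)])
    fix x assume x: "x \<in> S"
    have "0 \<notin> closed_segment (f x) (g x)"
      using segment_bound(1)[of 0 "f x" "g x"] assms(3,6) x
      by (force simp: norm_minus_commute)
    moreover have "closed_segment (f x) (g x) \<subseteq> T"
      using assms x by (intro closed_segment_subset subspace_imp_convex) auto
    ultimately show "closed_segment (f x) (g x) \<subseteq> T - {0}"
      by blast
  qed
  then have "homotopic_with_canon (\<lambda>x. True) S (sphere 0 1 \<inter> T)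
               ((\<lambda>y. y /\<^sub>R norm y) \<circ> f) ((\<lambda>y. y /\<^sub>R norm y) \<circ> g)"
    by (rule homotopic_with_compose_continuous_left)
       (use \<open>subspace T\<close> in \<open>auto intro!: continuous_intros simp: subspace_mul\<close>)
  then show ?thesis
    by (rule homotopic_with_eq) (use assms(3) in \<open>auto simp: Pi_iff\<close>)
qed

text \<open>The Euclidean core of the induction: Sard's lemma (\<open>spheremap_lemma1\<close>) applies to a
  smooth odd approximation of \<open>\<phi>\<close>, which is homotopic to \<open>\<phi>\<close>.\<close>

lemma odd_sphere_map_homotopic_nonsurjective:
  fixes \<phi> :: "'a::euclidean_space \<Rightarrow> 'a"
  assumes "subspace S" "subspace T" "dim S < dim T" "S \<subseteq> T"
    and "continuous_on (sphere 0 1 \<inter> T) \<phi>" "\<phi> \<in> sphere 0 1 \<inter> T \<rightarrow> sphere 0 1 \<inter> T"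
    and "\<And>x. x \<in> sphere 0 1 \<inter> T \<Longrightarrow> \<phi> (-x) = - \<phi> x"
  obtains \<psi> w where "\<And>x. \<psi> (-x) = - \<psi> x"
    "homotopic_with_canon (\<lambda>x. True) (sphere 0 1 \<inter> T) (sphere 0 1 \<inter> T) \<phi> \<psi>"
    "w \<in> sphere 0 1 \<inter> T" "w \<notin> \<psi> ` (sphere 0 1 \<inter> S)"
proof -
  have cpt: "compact (sphere 0 1 \<inter> T)"
    by (simp add: \<open>subspace T\<close> closed_subspace compact_Int_closed)
  have sym: "\<And>x. x \<in> sphere 0 1 \<inter> T \<Longrightarrow> -x \<in> sphere 0 1 \<inter> T"
    using \<open>subspace T\<close> by (auto simp: subspace_neg)
  have im: "\<phi> ` (sphere 0 1 \<inter> T) \<subseteq> T"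
    using assms(6) by auto
  obtain g where pg: "polynomial_function g" and godd: "\<And>x. g (-x) = - g x"
    and gT: "g ` (sphere 0 1 \<inter> T) \<subseteq> T"
    and approx: "\<And>x. x \<in> sphere 0 1 \<inter> T \<Longrightarrow> norm (\<phi> x - g x) < 1"
    using odd_polynomial_function_approximation[OF cpt sym assms(5) zero_less_one assms(2) im assms(7)]
    by blast
  define \<psi> where "\<psi> x = g x /\<^sub>R norm (g x)" for x
  have gnz: "g x \<noteq> 0" if "x \<in> sphere 0 1 \<inter> T" for x
    using approx[OF that] assms(6) that by force
  have hom: "homotopic_with_canon (\<lambda>x. True) (sphere 0 1 \<inter> T) (sphere 0 1 \<inter> T) \<phi> \<psi>"
    unfolding \<psi>_def
  proof (rule homotopic_with_normalized_approximation[OF assms(2,5,6) _ _ approx])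
    show "continuous_on (sphere 0 1 \<inter> T) g"
      using pg differentiable_imp_continuous_on differentiable_on_polynomial_function by blast
  qed (use gT in auto)
  have dg: "g differentiable_on sphere 0 1 \<inter> T"
    using pg differentiable_on_polynomial_function by blast
  have "\<psi> differentiable_on sphere 0 1 \<inter> T"
    unfolding \<psi>_def using gnz
    by (fastforce intro: derivative_intros dg differentiable_on_compose[OF dg])
  then have "\<psi> differentiable_on sphere 0 1 \<inter> S"
    by (rule differentiable_on_subset) (use \<open>S \<subseteq> T\<close> in auto)
  then obtain w where "w \<in> sphere 0 1 \<inter> T" "w \<notin> \<psi> ` (sphere 0 1 \<inter> S)"
    using spheremap_lemma1[OF assms(1-4)] homotopic_with_imp_funspace2[OF hom] \<open>S \<subseteq> T\<close>
    by blast
  moreover have "\<psi> (-x) = - \<psi> x" for x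
    by (simp add: \<psi>_def godd)
  ultimately show thesis
    using hom that by blast
qed


section \<open>Odd self-maps of spheres have odd degree\<close>

lemma dim_coord_subspace_pred_less:
  assumes "m < CARD('n::finite)" "m \<noteq> 0"
  shows "dim (coord_subspace (m - 1) :: (real^'n) set) < dim (coord_subspace m :: (real^'n) set)"
proof -
  let ?e = "axis (index_coord m) 1 :: real^'n"
  have sub: "coord_subspace (m - 1) \<subseteq> (coord_subspace m :: (real^'n) set)"
    by (auto simp: coord_subspace_def)
  have "?e \<in> coord_subspace m" "?e \<notin> coord_subspace (m - 1)"
    using assms by (auto simp: coord_subspace_def axis_def coord_index_index_coord)
  then have "coord_subspace (m - 1) \<noteq> (coord_subspace m :: (real^'n) set)"
    by blast
  then show ?thesis
    using subspace_dim_equal[OF subspace_coord_subspace subspace_coord_subspace sub]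
      dim_subset[OF sub] by fastforce
qed

lemma continuous_map_conj_vec_of_seq:
  assumes m: "m < CARD('n::finite)" and cf: "continuous_map (nsphere m) (nsphere m) f"
  shows "continuous_map (top_of_set (sphere 0 1 \<inter> coord_subspace m))
           (top_of_set (sphere 0 1 \<inter> coord_subspace m))
           ((vec_of_seq :: _ \<Rightarrow> real^'n) \<circ> f \<circ> (seq_of_vec :: real^'n \<Rightarrow> _))"
  by (rule continuous_map_compose[OF continuous_map_seq_of_vec[OF m]
        continuous_map_compose[OF cf continuous_map_vec_of_seq[OF m]]])

lemma homotopic_with_conj_seq_of_vec:
  assumes m: "m < CARD('n::finite)" and cf: "continuous_map (nsphere m) (nsphere m) f"
    and hom: "homotopic_with_canon (\<lambda>x. True) (sphere 0 1 \<inter> coord_subspace m)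
                (sphere 0 1 \<inter> coord_subspace m)
                ((vec_of_seq :: _ \<Rightarrow> real^'n) \<circ> f \<circ> (seq_of_vec :: real^'n \<Rightarrow> _)) \<psi>"
  shows "homotopic_with (\<lambda>x. True) (nsphere m) (nsphere m) f
           (seq_of_vec \<circ> \<psi> \<circ> (vec_of_seq :: _ \<Rightarrow> real^'n))"
proof -
  let ?\<phi> = "(vec_of_seq :: _ \<Rightarrow> real^'n) \<circ> f \<circ> (seq_of_vec :: real^'n \<Rightarrow> _)"
  have "homotopic_with (\<lambda>x. True) (nsphere m) (nsphere m)
          (seq_of_vec \<circ> ?\<phi> \<circ> vec_of_seq) (seq_of_vec \<circ> \<psi> \<circ> vec_of_seq)"
    by (rule homotopic_with_compose_continuous_map_right
        [OF homotopic_with_compose_continuous_map_left[OF hom continuous_map_seq_of_vec[OF m]]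
          continuous_map_vec_of_seq[OF m]]) auto
  then show ?thesis
  proof (rule homotopic_with_eq)
    fix x assume x: "x \<in> nsphere_points m"
    then have "f x \<in> nsphere_points m"
      using cf by (auto simp: continuous_map_def)
    then show "f x = (seq_of_vec \<circ> ?\<phi> \<circ> vec_of_seq) x"
      using x m by (simp add: seq_of_vec_of_seq mem_nsphere_iff)
  qed auto
qed

lemma odd_nsphere_map_homotopic_nonsurjective:
  fixes f :: "(nat \<Rightarrow> real) \<Rightarrow> nat \<Rightarrow> real"
  assumes m: "m < CARD('n::finite)" "m \<noteq> 0"
    and cf: "continuous_map (nsphere m) (nsphere m) f"
    and odd: "\<And>x. x \<in> nsphere_points m \<Longrightarrow> f (antipode x) = antipode (f x)"
  obtains g w where "\<And>x. x \<in> nsphere_points m \<Longrightarrow> g (antipode x) = antipode (g x)"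
    "homotopic_with (\<lambda>x. True) (nsphere m) (nsphere m) f g"
    "w \<in> nsphere_points m" "w \<notin> g ` nsphere_points (m - 1)"
proof -
  define S where "S = (coord_subspace (m - 1) :: (real^'n) set)"
  define T where "T = (coord_subspace m :: (real^'n) set)"
  define \<phi> where "\<phi> = (vec_of_seq \<circ> f \<circ> seq_of_vec :: real^'n \<Rightarrow> real^'n)"
  have sS: "subspace S" and sT: "subspace T"
    by (simp_all add: S_def T_def subspace_coord_subspace)
  have ST: "S \<subseteq> T" and dimST: "dim S < dim T"
    using dim_coord_subspace_pred_less[OF m] by (auto simp: S_def T_def coord_subspace_def)
  have "continuous_on (sphere 0 1 \<inter> T) \<phi>" "\<phi> \<in> sphere 0 1 \<inter> T \<rightarrow> sphere 0 1 \<inter> T"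
    using continuous_map_conj_vec_of_seq[OF m(1) cf]
    by (auto simp: continuous_map_subtopology_eu \<phi>_def T_def)
  moreover have "\<phi> (-x) = - \<phi> x" if "x \<in> sphere 0 1 \<inter> T" for x
    using seq_of_vec_in_nsphere[OF m(1)] that
    by (simp add: \<phi>_def T_def seq_of_vec_minus odd vec_of_seq_antipode)
  ultimately obtain \<psi> w where \<psi>odd: "\<And>x. \<psi> (-x) = - \<psi> x"
    and hom: "homotopic_with_canon (\<lambda>x. True) (sphere 0 1 \<inter> T) (sphere 0 1 \<inter> T) \<phi> \<psi>"
    and w: "w \<in> sphere 0 1 \<inter> T" "w \<notin> \<psi> ` (sphere 0 1 \<inter> S)"
    using odd_sphere_map_homotopic_nonsurjective[OF sS sT dimST ST] by blast
  define g where "g = seq_of_vec \<circ> \<psi> \<circ> vec_of_seq"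
  show thesis
  proof
    show "g (antipode x) = antipode (g x)" for x
      by (simp add: g_def vec_of_seq_antipode \<psi>odd seq_of_vec_minus)
    show "homotopic_with (\<lambda>x. True) (nsphere m) (nsphere m) f g"
      unfolding g_def using homotopic_with_conj_seq_of_vec[OF m(1) cf] hom
      by (simp add: \<phi>_def T_def)
    show "seq_of_vec w \<in> nsphere_points m"
      using seq_of_vec_in_nsphere[OF m(1)] w(1) by (simp add: T_def)
    show "seq_of_vec w \<notin> g ` nsphere_points (m - 1)"
    proof
      assume "seq_of_vec w \<in> g ` nsphere_points (m - 1)"
      then obtain x where x: "x \<in> nsphere_points (m - 1)" "seq_of_vec w = g x"
        by blast
      then have "w = \<psi> (vec_of_seq x)"
        by (metis comp_apply g_def vec_of_seq_of_vec)
      moreover have "vec_of_seq x \<in> sphere 0 1 \<inter> S"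
        using vec_of_seq_in_sphere[of "m - 1", where 'n='n] m x(1) by (simp add: S_def)
      ultimately show False
        using w(2) by blast
    qed
  qed
qed


definition sum_sq_upto :: "nat \<Rightarrow> (nat \<Rightarrow> real) \<Rightarrow> real" where
  "sum_sq_upto m v = (\<Sum>i\<le>m. (v i)\<^sup>2)"

definition normalize_upto :: "nat \<Rightarrow> (nat \<Rightarrow> real) \<Rightarrow> nat \<Rightarrow> real" where
  "normalize_upto m v = (\<lambda>i. v i / sqrt (sum_sq_upto m v))"

lemma sum_sq_upto_eq_0_iff: "sum_sq_upto m v = 0 \<longleftrightarrow> (\<forall>i\<le>m. v i = 0)"
  by (auto simp: sum_sq_upto_def sum_nonneg_eq_0_iff)

lemma normalize_upto_in_nsphere:
  assumes "sum_sq_upto m v \<noteq> 0" "\<And>i. m < i \<Longrightarrow> v i = 0"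
  shows "normalize_upto m v \<in> nsphere_points m"
proof -
  have pos: "0 < sum_sq_upto m v"
    using assms(1) by (simp add: order_le_neq_trans sum_nonneg sum_sq_upto_def)
  have "(\<Sum>i\<le>m. (normalize_upto m v i)\<^sup>2) = (\<Sum>i\<le>m. (v i)\<^sup>2 / sum_sq_upto m v)"
    using pos by (simp add: normalize_upto_def power_divide)
  also have "\<dots> = 1"
    using pos by (simp flip: sum_divide_distrib add: sum_sq_upto_def)
  finally show ?thesis
    using assms by (simp add: mem_nsphere_iff normalize_upto_def)
qed

lemma normalize_upto_nsphere: "v \<in> nsphere_points m \<Longrightarrow> normalize_upto m v = v"
  by (simp add: normalize_upto_def sum_sq_upto_def mem_nsphere_iff)

lemma normalize_upto_antipode: "normalize_upto m (antipode v) = antipode (normalize_upto m v)"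
  by (simp add: normalize_upto_def sum_sq_upto_def)

lemma continuous_on_normalize_upto:
  assumes "\<And>i. continuous_on S (\<lambda>x. f x i)" "\<And>x. x \<in> S \<Longrightarrow> sum_sq_upto m (f x) \<noteq> 0"
  shows "continuous_on S (\<lambda>x. normalize_upto m (f x))"
  unfolding normalize_upto_def
proof (intro continuous_on_coordinatewise_then_product continuous_on_divide assms)
  show "continuous_on S (\<lambda>x. sqrt (sum_sq_upto m (f x)))"
    unfolding sum_sq_upto_def by (intro continuous_intros assms)
qed (use assms(2) in auto)

definition inner_upto :: "nat \<Rightarrow> (nat \<Rightarrow> real) \<Rightarrow> (nat \<Rightarrow> real) \<Rightarrow> real" where
  "inner_upto m x u = (\<Sum>i\<le>m. x i * u i)"

definition reflect_upto :: "nat \<Rightarrow> (nat \<Rightarrow> real) \<Rightarrow> (nat \<Rightarrow> real) \<Rightarrow> nat \<Rightarrow> real" where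
  "reflect_upto m u x = (\<lambda>i. x i - (2 * inner_upto m x u / inner_upto m u u) * u i)"

lemma inner_upto_reflect_upto:
  assumes "inner_upto m u u \<noteq> 0"
  shows "inner_upto m (reflect_upto m u x) u = - inner_upto m x u"
proof -
  define c where "c = 2 * inner_upto m x u / inner_upto m u u"
  have "inner_upto m (reflect_upto m u x) u = (\<Sum>i\<le>m. (x i - c * u i) * u i)"
    by (simp add: inner_upto_def reflect_upto_def c_def)
  also have "\<dots> = inner_upto m x u - c * inner_upto m u u"
    by (simp add: inner_upto_def left_diff_distrib sum_subtractf sum_distrib_left mult.assoc)
  also have "c * inner_upto m u u = 2 * inner_upto m x u"
    using assms by (simp add: c_def)
  finally show ?thesis by simp
qed

lemma reflect_upto_involution:
  "inner_upto m u u \<noteq> 0 \<Longrightarrow> reflect_upto m u (reflect_upto m u x) = x"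
  by (simp add: reflect_upto_def[of m u "reflect_upto m u x"] inner_upto_reflect_upto)
     (simp add: reflect_upto_def)

lemma reflect_upto_antipode: "reflect_upto m u (antipode x) = antipode (reflect_upto m u x)"
  by (simp add: reflect_upto_def inner_upto_def sum_negf)

lemma reflect_upto_in_nsphere:
  assumes "inner_upto m u u \<noteq> 0" "\<And>i. m < i \<Longrightarrow> u i = 0" "x \<in> nsphere_points m"
  shows "reflect_upto m u x \<in> nsphere_points m"
proof -
  define c where "c = 2 * inner_upto m x u / inner_upto m u u"
  have cc: "c * inner_upto m u u = 2 * inner_upto m x u"
    using assms(1) by (simp add: c_def)
  have "(\<Sum>i\<le>m. (reflect_upto m u x i)\<^sup>2)
      = (\<Sum>i\<le>m. (x i)\<^sup>2 - 2 * c * (x i * u i) + c\<^sup>2 * (u i * u i))"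
    by (simp add: reflect_upto_def c_def power2_diff power2_eq_square algebra_simps)
  also have "\<dots> = (\<Sum>i\<le>m. (x i)\<^sup>2) - 2 * c * inner_upto m x u + c\<^sup>2 * inner_upto m u u"
    by (simp add: inner_upto_def sum.distrib sum_subtractf sum_distrib_left)
  also have "\<dots> = (\<Sum>i\<le>m. (x i)\<^sup>2)"
    using cc by (simp add: power2_eq_square algebra_simps)
  finally show ?thesis
    using assms by (simp add: mem_nsphere_iff reflect_upto_def)
qed

lemma continuous_on_reflect_upto: "inner_upto m u u \<noteq> 0 \<Longrightarrow> continuous_on S (reflect_upto m u)"
  unfolding reflect_upto_def inner_upto_def
  by (intro continuous_on_coordinatewise_then_product continuous_intros) auto

text \<open>The reflection in the hyperplane orthogonal to \<open>w - e\<close> exchanges \<open>e\<close> and \<open>w\<close>.\<close>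

lemma nsphere_reflection_exchanging:
  assumes e: "e \<in> nsphere_points m" and w: "w \<in> nsphere_points m" and "w \<noteq> e"
  obtains H where "homeomorphic_maps (nsphere m) (nsphere m) H H" "\<And>x. H (H x) = x"
    "\<And>x. H (antipode x) = antipode (H x)" "H e = w"
proof -
  define u where "u i = w i - e i" for i
  have u_vanish: "\<And>i. m < i \<Longrightarrow> u i = 0"
    using e w by (simp add: u_def mem_nsphere_iff)
  have "inner_upto m e u = inner_upto m e w - (\<Sum>i\<le>m. (e i)\<^sup>2)"
    by (simp add: inner_upto_def u_def right_diff_distrib sum_subtractf power2_eq_square)
  then have eu: "inner_upto m e u = inner_upto m e w - 1"
    using e by (simp add: mem_nsphere_iff)
  have "inner_upto m u u = (\<Sum>i\<le>m. (w i)\<^sup>2 - 2 * (e i * w i) + (e i)\<^sup>2)"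
    unfolding inner_upto_def u_def by (rule sum.cong) (auto simp: power2_eq_square algebra_simps)
  also have "\<dots> = (\<Sum>i\<le>m. (w i)\<^sup>2) - 2 * inner_upto m e w + (\<Sum>i\<le>m. (e i)\<^sup>2)"
    by (simp add: inner_upto_def sum.distrib sum_subtractf sum_distrib_left)
  finally have uu: "inner_upto m u u = 2 - 2 * inner_upto m e w"
    using e w by (simp add: mem_nsphere_iff)
  have "inner_upto m u u \<noteq> 0"
  proof
    assume "inner_upto m u u = 0"
    then have "\<forall>i\<le>m. u i = 0"
      using sum_sq_upto_eq_0_iff[of m u] by (simp add: inner_upto_def sum_sq_upto_def power2_eq_square)
    then show False
      using u_vanish \<open>w \<noteq> e\<close> by (auto simp: u_def fun_eq_iff) (metis not_le)
  qed
  then have "2 * inner_upto m e u / inner_upto m u u = -1"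
    using uu eu by (simp add: field_simps)
  then have "reflect_upto m u e = w"
    by (simp add: reflect_upto_def u_def)
  moreover have "continuous_map (nsphere m) (nsphere m) (reflect_upto m u)"
    using continuous_on_reflect_upto reflect_upto_in_nsphere[OF \<open>inner_upto m u u \<noteq> 0\<close> u_vanish]
      \<open>inner_upto m u u \<noteq> 0\<close> by (auto simp: continuous_map_nsphere_iff)
  ultimately show thesis
    using that reflect_upto_involution[OF \<open>inner_upto m u u \<noteq> 0\<close>] reflect_upto_antipode
    by (auto simp: homeomorphic_maps_def)
qed


definition north_pole :: "nat \<Rightarrow> nat \<Rightarrow> real" where
  "north_pole m = (\<lambda>i. if i = m then 1 else 0)"

lemma north_pole_in_nsphere: "north_pole m \<in> nsphere_points m"
  by (simp add: mem_nsphere_iff north_pole_def if_distrib[of "\<lambda>x. x\<^sup>2"] cong: if_cong)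

lemma nsphere_pole_cases:
  assumes x: "x \<in> nsphere_points m" and low: "\<And>i. i < m \<Longrightarrow> x i = 0"
  shows "x = north_pole m \<or> x = antipode (north_pole m)"
proof -
  have "(\<Sum>i\<le>m. (x i)\<^sup>2) = (\<Sum>i\<in>{m}. (x i)\<^sup>2)"
    by (rule sum.mono_neutral_right) (auto simp: low)
  then have xm: "(x m)\<^sup>2 = 1"
    using x by (simp add: mem_nsphere_iff)
  then have "x m = 1 \<or> x m = -1"
    by (simp add: power2_eq_1_iff)
  moreover have "x i = 0" if "i \<noteq> m" for i
    using topspace_nsphere_1_eq_0[OF x xm that] .
  ultimately show ?thesis
    by (auto simp: north_pole_def fun_eq_iff)
qed

text \<open>A deformation of \<open>k\<close> (at \<open>t = 0\<close>) into a map sending the equator \<open>x m = 0\<close> into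
  itself (at \<open>t = 1\<close>); the scaling factor vanishes only at \<open>t = 1\<close> on the equator.\<close>

definition squash_pole ::
    "nat \<Rightarrow> ((nat \<Rightarrow> real) \<Rightarrow> nat \<Rightarrow> real) \<Rightarrow> real \<Rightarrow> (nat \<Rightarrow> real) \<Rightarrow> nat \<Rightarrow> real" where
  "squash_pole m k t x = (\<lambda>i. if i = m then k x m * (1 - t + t * (x m)\<^sup>2) else k x i)"

lemma sum_sq_upto_squash_pole_nonzero:
  assumes ksph: "\<And>x. x \<in> nsphere_points m \<Longrightarrow> k x \<in> nsphere_points m"
    and kodd: "\<And>x. x \<in> nsphere_points m \<Longrightarrow> k (antipode x) = antipode (k x)"
    and pole: "north_pole m \<notin> k ` nsphere_points (m - 1)"
    and t: "t \<in> {0..1}" and x: "x \<in> nsphere_points m"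
  shows "sum_sq_upto m (squash_pole m k t x) \<noteq> 0"
proof
  assume "sum_sq_upto m (squash_pole m k t x) = 0"
  then have vanish: "\<forall>i\<le>m. squash_pole m k t x i = 0"
    by (simp add: sum_sq_upto_eq_0_iff)
  have "k x i = 0" if "i < m" for i
    using vanish that by (auto simp: squash_pole_def dest: spec[of _ i])
  then have kx: "k x = north_pole m \<or> k x = antipode (north_pole m)"
    using ksph[OF x] by (intro nsphere_pole_cases)
  then have "1 - t + t * (x m)\<^sup>2 = 0"
    using vanish by (auto simp: squash_pole_def north_pole_def)
  moreover have "0 \<le> t" "t \<le> 1"
    using t by auto
  moreover have "0 \<le> t * (x m)\<^sup>2"
    using \<open>0 \<le> t\<close> by simp
  ultimately have "t = 1" "t * (x m)\<^sup>2 = 0"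
    by linarith+
  then have eq: "x \<in> nsphere_points (m - 1)"
    using topspace_nsphere_minus1[OF x] by simp
  from kx show False
  proof
    assume "k x = north_pole m"
    then show False
      using pole eq by (metis image_eqI)
  next
    assume "k x = antipode (north_pole m)"
    then have "k (antipode x) = north_pole m"
      using kodd[OF x] by simp
    then show False
      using pole antipode_mem_nsphere[OF eq] by (metis image_eqI)
  qed
qed

lemma homotopic_squash_pole:
  assumes ck: "continuous_map (nsphere m) (nsphere m) k"
    and nz: "\<And>t x. t \<in> {0..1} \<Longrightarrow> x \<in> nsphere_points m \<Longrightarrow> sum_sq_upto m (squash_pole m k t x) \<noteq> 0"
  shows "homotopic_with (\<lambda>x. True) (nsphere m) (nsphere m) k
           (\<lambda>x. normalize_upto m (squash_pole m k 1 x))"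
proof -
  define h where "h p = normalize_upto m (squash_pole m k (fst p) (snd p))" for p
  have kon: "continuous_on (nsphere_points m) k" and ksph: "k ` nsphere_points m \<subseteq> nsphere_points m"
    using ck unfolding continuous_map_nsphere_iff by blast+
  have "continuous_on ({0..1} \<times> nsphere_points m) h"
    unfolding h_def
  proof (rule continuous_on_normalize_upto)
    have "continuous_on ({0..1} \<times> nsphere_points m) (\<lambda>p::real \<times> _. k (snd p))"
      by (rule continuous_on_compose2[OF kon continuous_on_snd[OF continuous_on_id]]) auto
    then have "continuous_on ({0..1} \<times> nsphere_points m) (\<lambda>p::real \<times> _. k (snd p) i)" for i
      by (rule continuous_on_product_then_coordinatewise)
    moreover have "continuous_on ({0..1} \<times> nsphere_points m) (\<lambda>p::real \<times> _. snd p i)" for i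
      by (rule continuous_on_product_then_coordinatewise[OF continuous_on_snd[OF continuous_on_id]])
    ultimately show "continuous_on ({0..1} \<times> nsphere_points m) (\<lambda>p. squash_pole m k (fst p) (snd p) i)" for i
      unfolding squash_pole_def by (cases "i = m") (auto intro!: continuous_intros)
  qed (use nz in auto)
  moreover have "h p \<in> nsphere_points m" if "p \<in> {0..1} \<times> nsphere_points m" for p
    using that nz ksph unfolding h_def
    by (intro normalize_upto_in_nsphere) (auto simp: squash_pole_def mem_nsphere_iff)
  ultimately have "homotopic_with (\<lambda>x. True) (top_of_set (nsphere_points m)) (top_of_set (nsphere_points m))
                     (\<lambda>x. h (0, x)) (\<lambda>x. h (1, x))"
    unfolding homotopic_with_def
    by (intro exI[of _ h]) (auto simp: continuous_map_subtopology_eu)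
  then have "homotopic_with (\<lambda>x. True) (nsphere m) (nsphere m) (\<lambda>x. h (0, x)) (\<lambda>x. h (1, x))"
    by (simp flip: nsphere_eq_top_of_set)
  then show ?thesis
  proof (rule homotopic_with_eq)
    show "k x = h (0, x)" if "x \<in> nsphere_points m" for x
    proof -
      have "squash_pole m k 0 x = k x"
        by (simp add: squash_pole_def fun_eq_iff)
      then show ?thesis
        using ksph that by (auto simp: h_def normalize_upto_nsphere)
    qed
  qed (auto simp: h_def)
qed


lemma Brouwer_degree2_odd_if_pole_missed:
  assumes "m \<noteq> 0"
    and IH: "\<And>f. continuous_map (nsphere (m - 1)) (nsphere (m - 1)) f \<Longrightarrow>
               (\<And>x. x \<in> nsphere_points (m - 1) \<Longrightarrow> f (antipode x) = antipode (f x)) \<Longrightarrow>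
               odd (Brouwer_degree2 (m - 1) f)"
    and ck: "continuous_map (nsphere m) (nsphere m) k"
    and kodd: "\<And>x. x \<in> nsphere_points m \<Longrightarrow> k (antipode x) = antipode (k x)"
    and pole: "north_pole m \<notin> k ` nsphere_points (m - 1)"
  shows "odd (Brouwer_degree2 m k)"
proof -
  define k1 where "k1 x = normalize_upto m (squash_pole m k 1 x)" for x
  have "\<And>x. x \<in> nsphere_points m \<Longrightarrow> k x \<in> nsphere_points m"
    using ck by (auto simp: continuous_map_def)
  then have hom: "homotopic_with (\<lambda>x. True) (nsphere m) (nsphere m) k k1"
    unfolding k1_def
    by (intro homotopic_squash_pole[OF ck] sum_sq_upto_squash_pole_nonzero[OF _ kodd pole]) auto
  then have ck1: "continuous_map (nsphere m) (nsphere m) k1"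
    using homotopic_with_imp_continuous_maps by blast
  have k1odd: "k1 (antipode x) = antipode (k1 x)" if "x \<in> nsphere_points m" for x
  proof -
    have "squash_pole m k 1 (antipode x) = antipode (squash_pole m k 1 x)"
      using kodd[OF that] by (auto simp: squash_pole_def fun_eq_iff)
    then show ?thesis
      by (simp add: k1_def normalize_upto_antipode)
  qed
  have k1eq: "k1 x \<in> nsphere_points (m - 1)" if "x \<in> nsphere_points (m - 1)" for x
  proof -
    have x: "x \<in> nsphere_points m" "x m = 0"
      using nsphere_equator_points[OF \<open>m \<noteq> 0\<close> that] by auto
    then have "k1 x \<in> nsphere_points m"
      using ck1 by (auto simp: continuous_map_def)
    moreover have "k1 x m = 0"
      using x by (simp add: k1_def normalize_upto_def squash_pole_def)
    ultimately show ?thesis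
      using topspace_nsphere_minus1 by fastforce
  qed
  have "continuous_on (nsphere_points (m - 1)) k1"
    using ck1 nsphere_points_mono_pred[OF \<open>m \<noteq> 0\<close>]
    by (auto simp: continuous_map_nsphere_iff intro: continuous_on_subset)
  then have "odd (Brouwer_degree2 (m - 1) k1)"
    using IH k1odd k1eq nsphere_points_mono_pred[OF \<open>m \<noteq> 0\<close>]
    by (auto simp: continuous_map_nsphere_iff)
  moreover have "even (Brouwer_degree2 m k1 - Brouwer_degree2 (m - Suc 0) k1)"
    by (rule Borsuk_odd_mapping_degree_step[OF ck1]) (use k1odd k1eq in auto)
  ultimately show ?thesis
    using Brouwer_degree2_homotopic[OF hom] by simp
qed

lemma Brouwer_degree2_odd_map_0:
  assumes cf: "continuous_map (nsphere 0) (nsphere 0) f"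
    and odd: "\<And>x. x \<in> nsphere_points 0 \<Longrightarrow> f (antipode x) = antipode (f x)"
  shows "odd (Brouwer_degree2 0 f)"
proof -
  let ?e = "north_pole 0"
  have S0: "x = ?e \<or> x = antipode ?e" if "x \<in> nsphere_points 0" for x
    using nsphere_pole_cases[OF that] by simp
  have fe: "f (antipode ?e) = antipode (f ?e)"
    using odd[OF north_pole_in_nsphere] .
  have "f ?e \<in> nsphere_points 0"
    using cf north_pole_in_nsphere by (auto simp: continuous_map_def)
  then consider "f ?e = ?e" | "f ?e = antipode ?e"
    using S0 by blast
  then show ?thesis
  proof cases
    case 1
    then have "Brouwer_degree2 0 f = Brouwer_degree2 0 id"
      using S0 fe by (intro Brouwer_degree2_eq) auto
    then show ?thesis
      by simp
  next
    case 2
    have "f x = (\<lambda>i. if i = 0 then - x i else x i)" if "x \<in> nsphere_points 0" for x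
      using S0[OF that]
    proof
      assume x: "x = ?e"
      then have "f x = antipode ?e"
        using 2 by simp
      then show ?thesis
        using x by (auto simp: north_pole_def)
    next
      assume x: "x = antipode ?e"
      then have "f x = ?e"
        using 2 fe by simp
      then show ?thesis
        using x by (auto simp: north_pole_def)
    qed
    then have "Brouwer_degree2 0 f = Brouwer_degree2 0 (\<lambda>x i. if i = 0 then - x i else x i)"
      by (rule Brouwer_degree2_eq)
    then show ?thesis
      by (simp add: Brouwer_degree2_reflection)
  qed
qed

lemma antipode_notin_odd_image:
  assumes "\<And>x. x \<in> A \<Longrightarrow> antipode x \<in> A" "\<And>x. x \<in> A \<Longrightarrow> g (antipode x) = antipode (g x)"
    and "w \<notin> g ` A"
  shows "antipode w \<notin> g ` A"
proof
  assume "antipode w \<in> g ` A"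
  then obtain x where x: "x \<in> A" "antipode w = g x"
    by blast
  then have "g (antipode x) = w" "antipode x \<in> A"
    using assms(1,2)[OF x(1)] x(2)[symmetric] by auto
  then show False
    using assms(3) by blast
qed

lemma odd_map_rotated_to_miss_pole:
  assumes "m \<noteq> 0" and cg: "continuous_map (nsphere m) (nsphere m) g"
    and godd: "\<And>x. x \<in> nsphere_points m \<Longrightarrow> g (antipode x) = antipode (g x)"
    and w: "w \<in> nsphere_points m" "w \<notin> g ` nsphere_points (m - 1)"
  obtains H where "continuous_map (nsphere m) (nsphere m) H" "\<bar>Brouwer_degree2 m H\<bar> = 1"
    "\<And>x. H (antipode x) = antipode (H x)" "north_pole m \<notin> (H \<circ> g) ` nsphere_points (m - 1)"
proof -
  define w' where "w' = (if w = north_pole m then antipode w else w)"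
  have "antipode w \<notin> g ` nsphere_points (m - 1)"
    by (rule antipode_notin_odd_image[OF _ _ w(2)])
       (use godd nsphere_equator_points[OF \<open>m \<noteq> 0\<close>] antipode_mem_nsphere in auto)
  moreover have "antipode (north_pole m) \<noteq> north_pole m"
    by (auto simp: north_pole_def fun_eq_iff dest: spec[of _ m])
  ultimately have w': "w' \<in> nsphere_points m" "w' \<noteq> north_pole m"
    "w' \<notin> g ` nsphere_points (m - 1)"
    using w antipode_mem_nsphere[OF w(1)] by (auto simp: w'_def)
  obtain H where homH: "homeomorphic_maps (nsphere m) (nsphere m) H H"
    and HH: "\<And>x. H (H x) = x" and Hodd: "\<And>x. H (antipode x) = antipode (H x)"
    and He: "H (north_pole m) = w'"
    using nsphere_reflection_exchanging[OF north_pole_in_nsphere w'(1,2)] by blast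
  show thesis
  proof
    show "continuous_map (nsphere m) (nsphere m) H"
      using homH unfolding homeomorphic_maps_def by blast
    show "\<bar>Brouwer_degree2 m H\<bar> = 1"
      using Brouwer_degree2_homeomorphic_maps[OF homH] by blast
    show "north_pole m \<notin> (H \<circ> g) ` nsphere_points (m - 1)"
    proof
      assume "north_pole m \<in> (H \<circ> g) ` nsphere_points (m - 1)"
      then obtain x where x: "x \<in> nsphere_points (m - 1)" "H (g x) = north_pole m"
        by auto
      then have "g x = w'"
        using HH[of "g x"] He by simp
      then show False
        using w'(3) x(1) by blast
    qed
  qed (rule Hodd)
qed

text \<open>The type \<open>'n\<close> only provides a Euclidean model of the sphere.\<close>

theorem Brouwer_degree2_odd_map:
  assumes "m < CARD('n::finite)" "continuous_map (nsphere m) (nsphere m) f"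
    and "\<And>x. x \<in> nsphere_points m \<Longrightarrow> f (antipode x) = antipode (f x)"
  shows "odd (Brouwer_degree2 m f)"
  using assms
proof (induction m arbitrary: f)
  case 0
  then show ?case
    using Brouwer_degree2_odd_map_0 by blast
next
  case (Suc m)
  obtain g w where godd: "\<And>x. x \<in> nsphere_points (Suc m) \<Longrightarrow> g (antipode x) = antipode (g x)"
    and hom: "homotopic_with (\<lambda>x. True) (nsphere (Suc m)) (nsphere (Suc m)) f g"
    and w: "w \<in> nsphere_points (Suc m)" "w \<notin> g ` nsphere_points m"
    using odd_nsphere_map_homotopic_nonsurjective[of "Suc m" f, where 'n='n] Suc.prems by auto
  have cg: "continuous_map (nsphere (Suc m)) (nsphere (Suc m)) g"
    using homotopic_with_imp_continuous_maps[OF hom] by blast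
  obtain H where cH: "continuous_map (nsphere (Suc m)) (nsphere (Suc m)) H"
    and degH: "\<bar>Brouwer_degree2 (Suc m) H\<bar> = 1" and Hodd: "\<And>x. H (antipode x) = antipode (H x)"
    and pole: "north_pole (Suc m) \<notin> (H \<circ> g) ` nsphere_points (Suc m - 1)"
    using odd_map_rotated_to_miss_pole[of "Suc m" g w] cg godd w by auto
  have "odd (Brouwer_degree2 (Suc m) (H \<circ> g))"
  proof (rule Brouwer_degree2_odd_if_pole_missed[OF _ _ _ _ pole])
    show "odd (Brouwer_degree2 (Suc m - 1) f)"
      if "continuous_map (nsphere (Suc m - 1)) (nsphere (Suc m - 1)) f"
        and "\<And>x. x \<in> nsphere_points (Suc m - 1) \<Longrightarrow> f (antipode x) = antipode (f x)" for f
      using Suc.IH[of f] Suc.prems(1) that by simp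
    show "continuous_map (nsphere (Suc m)) (nsphere (Suc m)) (H \<circ> g)"
      by (rule continuous_map_compose[OF cg cH])
    show "(H \<circ> g) (antipode x) = antipode ((H \<circ> g) x)" if "x \<in> nsphere_points (Suc m)" for x
      by (simp only: comp_apply godd[OF that] Hodd)
  qed simp
  then have "odd (Brouwer_degree2 (Suc m) g)"
    using degH by (auto simp: Brouwer_degree2_compose[OF cg cH] abs_if split: if_splits)
  then show ?case
    by (simp add: Brouwer_degree2_homotopic[OF hom])
qed


section \<open>Borsuk--Ulam\<close>

lemma no_odd_map_nsphere_to_equator:
  assumes d: "d < CARD('n::finite)" "d \<noteq> 0"
    and cf: "continuous_on (nsphere_points d) f"
    and fS: "f ` nsphere_points d \<subseteq> nsphere_points (d - 1)"
    and fodd: "\<And>y. y \<in> nsphere_points d \<Longrightarrow> f (antipode y) = antipode (f y)"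
  shows False
proof -
  have sub: "nsphere_points (d - 1) \<subseteq> nsphere_points d"
    using nsphere_points_mono_pred[OF \<open>d \<noteq> 0\<close>] .
  have cmf: "continuous_map (nsphere d) (nsphere d) f"
    using cf fS sub by (auto simp: continuous_map_nsphere_iff)
  have "north_pole d \<notin> nsphere_points (d - 1)"
    using nsphere_equator_points(2)[OF \<open>d \<noteq> 0\<close>, of "north_pole d"] by (auto simp: north_pole_def)
  then have "Brouwer_degree2 d f = 0"
    using Brouwer_degree2_nonsurjective[OF cmf] north_pole_in_nsphere fS by blast
  moreover have "odd (Brouwer_degree2 (d - 1) f)"
  proof (rule Brouwer_degree2_odd_map[where 'n='n])
    show "continuous_map (nsphere (d - 1)) (nsphere (d - 1)) f"
      using continuous_on_subset[OF cf sub] fS sub by (auto simp: continuous_map_nsphere_iff)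
  qed (use d fodd sub in auto)
  moreover have "even (Brouwer_degree2 d f - Brouwer_degree2 (d - Suc 0) f)"
    by (rule Borsuk_odd_mapping_degree_step[OF cmf]) (use fodd fS sub in auto)
  ultimately show False
    by simp
qed

theorem Borsuk_Ulam_nsphere:
  fixes G :: "(nat \<Rightarrow> real) \<Rightarrow> nat \<Rightarrow> real"
  assumes d: "d < CARD('n::finite)"
    and cG: "continuous_on (nsphere_points d) G"
    and Godd: "\<And>y. y \<in> nsphere_points d \<Longrightarrow> G (antipode y) = antipode (G y)"
    and Gvanish: "\<And>y i. y \<in> nsphere_points d \<Longrightarrow> d \<le> i \<Longrightarrow> G y i = 0"
  shows "\<exists>y\<in>nsphere_points d. G y = (\<lambda>i. 0)"
proof (rule ccontr)
  assume no_zero: "\<not> ?thesis"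
  have "d \<noteq> 0"
  proof
    assume "d = 0"
    then have "G (north_pole d) = (\<lambda>i. 0)"
      using Gvanish north_pole_in_nsphere by auto
    then show False
      using no_zero north_pole_in_nsphere by blast
  qed
  have nz: "sum_sq_upto (d - 1) (G y) \<noteq> 0" if "y \<in> nsphere_points d" for y
  proof
    assume "sum_sq_upto (d - 1) (G y) = 0"
    then have "G y i = 0" for i
      using Gvanish[OF that, of i] \<open>d \<noteq> 0\<close> by (cases "i < d") (auto simp: sum_sq_upto_eq_0_iff)
    then show False
      using no_zero that by auto
  qed
  show False
  proof (rule no_odd_map_nsphere_to_equator[OF d \<open>d \<noteq> 0\<close>])
    show "continuous_on (nsphere_points d) (\<lambda>y. normalize_upto (d - 1) (G y))"
      by (rule continuous_on_normalize_upto[OF continuous_on_product_then_coordinatewise[OF cG] nz])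
    show "(\<lambda>y. normalize_upto (d - 1) (G y)) ` nsphere_points d \<subseteq> nsphere_points (d - 1)"
      using nz Gvanish \<open>d \<noteq> 0\<close> by (auto intro!: normalize_upto_in_nsphere)
    show "normalize_upto (d - 1) (G (antipode y)) = antipode (normalize_upto (d - 1) (G y))"
      if "y \<in> nsphere_points d" for y
      using Godd[OF that] by (simp add: normalize_upto_antipode)
  qed
qed

section \<open>An odd map from the sphere to the skeleton\<close>

definition moment_poly :: "nat \<Rightarrow> (nat \<Rightarrow> real) \<Rightarrow> real \<Rightarrow> real" where
  "moment_poly d y s = (\<Sum>k\<le>d. y k * s ^ k)"

lemma moment_poly_antipode: "moment_poly d (antipode y) s = - moment_poly d y s"
  by (simp add: moment_poly_def sum_negf)

lemma moment_poly_roots: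
  assumes "y \<in> nsphere_points d"
  shows "finite {s. moment_poly d y s = 0}" "card {s. moment_poly d y s = 0} \<le> d"
proof -
  define p where "p = (\<Sum>k\<le>d. Polynomial.monom (y k) k)"
  have poly_p: "{s. moment_poly d y s = 0} = {s. poly p s = 0}"
    by (simp add: p_def poly_sum poly_monom moment_poly_def)
  have coeff_p: "Polynomial.coeff p i = (if i \<le> d then y i else 0)" for i
    by (simp add: p_def coeff_sum coeff_monom)
  have "p \<noteq> 0"
  proof
    assume "p = 0"
    then have "\<forall>i\<le>d. y i = 0"
      using coeff_p by (metis coeff_0)
    then show False
      using assms by (simp add: mem_nsphere_iff)
  qed
  moreover have "Polynomial.degree p \<le> d"
    by (rule degree_le) (simp add: coeff_p)
  ultimately show "finite {s. moment_poly d y s = 0}" "card {s. moment_poly d y s = 0} \<le> d"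
    unfolding poly_p using poly_roots_finite card_poly_roots_bound le_trans by blast+
qed

lemma moment_poly_abs_sum_pos:
  assumes "y \<in> nsphere_points d" "inj_on t J" "card J = Suc d"
  shows "0 < (\<Sum>j\<in>J. \<bar>moment_poly d y (t j)\<bar>)"
proof (rule ccontr)
  assume "\<not> ?thesis"
  moreover have "0 \<le> (\<Sum>j\<in>J. \<bar>moment_poly d y (t j)\<bar>)"
    by (intro sum_nonneg) simp
  ultimately have "(\<Sum>j\<in>J. \<bar>moment_poly d y (t j)\<bar>) = 0"
    by linarith
  moreover have "finite J"
    using assms(3) card_ge_0_finite by force
  ultimately have "\<forall>j\<in>J. moment_poly d y (t j) = 0"
    by (simp add: sum_nonneg_eq_0_iff)
  then have "t ` J \<subseteq> {s. moment_poly d y s = 0}"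
    by blast
  then have "card (t ` J) \<le> d"
    using moment_poly_roots[OF assms(1)] card_mono le_trans by blast
  then show False
    using assms(2,3) by (simp add: card_image)
qed

lemma moment_poly_abs_sum_bounded_below:
  assumes d: "d < CARD('n::finite)" and "inj_on t J" "card J = Suc d"
  obtains \<delta> where "\<delta> > 0" "\<And>y. y \<in> nsphere_points d \<Longrightarrow> \<delta> \<le> (\<Sum>j\<in>J. \<bar>moment_poly d y (t j)\<bar>)"
proof -
  define M where "M y = (\<Sum>j\<in>J. \<bar>moment_poly d y (t j)\<bar>)" for y
  have "continuous_on (nsphere_points d) M"
    unfolding M_def moment_poly_def by (intro continuous_intros)
  then obtain y0 where y0: "y0 \<in> nsphere_points d" "\<forall>y\<in>nsphere_points d. M y0 \<le> M y"
    using continuous_attains_inf[OF compact_nsphere_points[OF d]] north_pole_in_nsphere by blast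
  show thesis
  proof (rule that)
    show "0 < M y0"
      unfolding M_def by (rule moment_poly_abs_sum_pos[OF y0(1) assms(2,3)])
    show "M y0 \<le> (\<Sum>j\<in>J. \<bar>moment_poly d y (t j)\<bar>)" if "y \<in> nsphere_points d" for y
      using y0(2) that unfolding M_def by blast
  qed
qed

lemma moment_poly_uniformly_few_small_values:
  fixes t :: "'n::finite \<Rightarrow> real"
  assumes d: "d < CARD('n)" and "inj t"
  obtains \<epsilon> where "\<epsilon> > 0" "\<And>y. y \<in> nsphere_points d \<Longrightarrow> card {j. \<bar>moment_poly d y (t j)\<bar> < \<epsilon>} \<le> d"
proof -
  define Js where "Js = {J::'n set. card J = Suc d}"
  have "\<exists>\<delta>>0. \<forall>y\<in>nsphere_points d. \<delta> \<le> (\<Sum>j\<in>J. \<bar>moment_poly d y (t j)\<bar>)" if "J \<in> Js" for J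
  proof -
    have "card J = Suc d"
      using that by (simp add: Js_def)
    then obtain \<delta> where "\<delta> > 0" "\<And>y. y \<in> nsphere_points d \<Longrightarrow> \<delta> \<le> (\<Sum>j\<in>J. \<bar>moment_poly d y (t j)\<bar>)"
      using moment_poly_abs_sum_bounded_below[OF d inj_on_subset[OF \<open>inj t\<close> subset_UNIV]] by blast
    then show ?thesis
      by blast
  qed
  then obtain \<delta> where \<delta>: "\<And>J. J \<in> Js \<Longrightarrow> 0 < \<delta> J"
    and bound: "\<And>J y. J \<in> Js \<Longrightarrow> y \<in> nsphere_points d \<Longrightarrow> \<delta> J \<le> (\<Sum>j\<in>J. \<bar>moment_poly d y (t j)\<bar>)"
    by metis
  obtain J0 :: "'n set" where "card J0 = Suc d"
    using d obtain_subset_with_card_n[of "Suc d" "UNIV :: 'n set"] by auto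
  then have Js: "finite Js" "Js \<noteq> {}"
    by (auto simp: Js_def)
  define \<epsilon> where "\<epsilon> = Min (\<delta> ` Js) / Suc d"
  show thesis
  proof
    show "0 < \<epsilon>"
      using Js \<delta> by (simp add: \<epsilon>_def)
    show "card {j. \<bar>moment_poly d y (t j)\<bar> < \<epsilon>} \<le> d" if y: "y \<in> nsphere_points d" for y
    proof (rule ccontr)
      assume "\<not> ?thesis"
      then obtain J where J: "J \<subseteq> {j. \<bar>moment_poly d y (t j)\<bar> < \<epsilon>}" "card J = Suc d"
        by (metis not_less_eq_eq obtain_subset_with_card_n)
      then have "J \<in> Js" "J \<noteq> {}"
        by (auto simp: Js_def)
      then have "(\<Sum>j\<in>J. \<bar>moment_poly d y (t j)\<bar>) < (\<Sum>j\<in>J. \<epsilon>)"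
        using J by (intro sum_strict_mono) (auto simp: card_ge_0_finite)
      also have "\<dots> = Min (\<delta> ` Js)"
        using J(2) by (simp add: \<epsilon>_def)
      also have "\<dots> \<le> (\<Sum>j\<in>J. \<bar>moment_poly d y (t j)\<bar>)"
        using Js bound[OF \<open>J \<in> Js\<close> y] \<open>J \<in> Js\<close> by (meson Min_le finite_imageI image_eqI order_trans)
      finally show False
        by simp
    qed
  qed
qed

definition clamp :: "real \<Rightarrow> real" where
  "clamp s = max (-1) (min 1 s)"

lemma abs_clamp_le: "\<bar>clamp s\<bar> \<le> 1"
  by (auto simp: clamp_def)

lemma abs_clamp_eq_1: "1 \<le> \<bar>s\<bar> \<Longrightarrow> \<bar>clamp s\<bar> = 1"
  by (auto simp: clamp_def)

lemma clamp_minus: "clamp (- s) = - clamp s"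
  by (auto simp: clamp_def)

lemma odd_map_nsphere_to_cube_skeleton:
  assumes "d < CARD('n::finite)"
  obtains E :: "(nat \<Rightarrow> real) \<Rightarrow> real^'n"
  where "continuous_on (nsphere_points d) E" "E ` nsphere_points d \<subseteq> cube_skeleton d"
    "\<And>y. E (antipode y) = - E y"
proof -
  define t where "t j = real (coord_index (j::'n))" for j
  have "inj t"
    using inj_coord_index by (auto simp: inj_def t_def)
  then obtain \<epsilon> where \<epsilon>: "\<epsilon> > 0"
    and few: "\<And>y. y \<in> nsphere_points d \<Longrightarrow> card {j. \<bar>moment_poly d y (t j)\<bar> < \<epsilon>} \<le> d"
    using moment_poly_uniformly_few_small_values[OF assms] by blast
  define E :: "(nat \<Rightarrow> real) \<Rightarrow> real^'n" where
    "E y = (\<chi> j. clamp (moment_poly d y (t j) / \<epsilon>))" for y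
  show thesis
  proof
    show "continuous_on (nsphere_points d) E"
      unfolding E_def clamp_def moment_poly_def
      by (intro continuous_on_vec_lambda continuous_intros) (use \<epsilon> in auto)
    show "E (antipode y) = - E y" for y
      by (simp add: E_def vec_eq_iff moment_poly_antipode clamp_minus)
    show "E ` nsphere_points d \<subseteq> cube_skeleton d"
    proof clarify
      fix y assume y: "y \<in> nsphere_points d"
      define \<sigma> where "\<sigma> = UNIV - {j. \<bar>moment_poly d y (t j)\<bar> < \<epsilon>}"
      have "CARD('n) - d \<le> card \<sigma>"
        using few[OF y] by (simp add: \<sigma>_def card_Diff_subset diff_le_mono2)
      moreover have "\<bar>E y $ j\<bar> = 1" if "j \<in> \<sigma>" for j
        using that \<epsilon> by (auto simp: E_def \<sigma>_def abs_divide intro!: abs_clamp_eq_1)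
      ultimately show "E y \<in> cube_skeleton d"
        by (auto simp: cube_skeleton_def E_def abs_clamp_le)
    qed
  qed
qed

lemma continuous_on_antipodal_difference:
  fixes H :: "(nat \<Rightarrow> real) \<Rightarrow> nat \<Rightarrow> real"
  assumes "continuous_on (nsphere_points d) H"
  shows "continuous_on (nsphere_points d) (\<lambda>y i. H y i - H (antipode y) i)"
proof -
  have "continuous_on (nsphere_points d) antipode"
    by (rule continuous_on_coordinatewise_then_product) (intro continuous_intros)
  then have cHa: "continuous_on (nsphere_points d) (\<lambda>y. H (antipode y))"
    by (rule continuous_on_compose2[OF assms]) (use antipode_mem_nsphere in blast)
  show ?thesis
  proof (rule continuous_on_coordinatewise_then_product)
    fix i
    show "continuous_on (nsphere_points d) (\<lambda>y. H y i - H (antipode y) i)"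
      using continuous_on_product_then_coordinatewise[OF assms, of i]
        continuous_on_product_then_coordinatewise[OF cHa, of i]
      by (rule continuous_on_diff)
  qed
qed

theorem lemma2p5:
  fixes d :: nat and F :: "real^'n \<Rightarrow> (nat \<Rightarrow> real)"
  assumes "d < CARD('n)"
    and "continuous_on (cube_skeleton d) F"
    and "F ` cube_skeleton d \<subseteq> Rd d"
  shows "\<exists>z\<in>cube_skeleton d. F z = F (- z)"
proof -
  obtain E :: "(nat \<Rightarrow> real) \<Rightarrow> real^'n" where cE: "continuous_on (nsphere_points d) E"
    and E: "E ` nsphere_points d \<subseteq> cube_skeleton d" and Eodd: "\<And>y. E (antipode y) = - E y"
    using odd_map_nsphere_to_cube_skeleton[OF assms(1)] by blast
  define G where "G y = (\<lambda>i. F (E y) i - F (E (antipode y)) i)" for y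
  have "continuous_on (nsphere_points d) G"
    unfolding G_def
    by (rule continuous_on_antipodal_difference[OF continuous_on_compose2[OF assms(2) cE E]])
  moreover have "G y i = 0" if "y \<in> nsphere_points d" "d \<le> i" for y i
  proof -
    have "F (E y) \<in> Rd d" "F (E (antipode y)) \<in> Rd d"
      using assms(3) E that(1) antipode_mem_nsphere[OF that(1)] by blast+
    then show ?thesis
      using that(2) by (simp add: G_def Rd_def)
  qed
  ultimately obtain y where y: "y \<in> nsphere_points d" "G y = (\<lambda>i. 0)"
    using Borsuk_Ulam_nsphere[OF assms(1)] by (fastforce simp: G_def)
  then have "F (E y) = F (- E y)"
    by (simp add: G_def fun_eq_iff flip: Eodd)
  then show ?thesis
    using E y(1) by blast
qed

end
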